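(* Let $F$ be a field, $t\ge 1$, and let $e_1,\dots,e_t\in M_n(F)$ be nonzero pairwise orthogonal idempotents ($e_ie_j=0$ for $i\ne j$, $e_i^2=e_i$) with $e_1+\cdots+e_t=I_n$; let $n_i=\mathrm{rank}(e_i)$. Let $\sigma_1,\dots,\sigma_t\in F$ be such that $\sum_{i=1}^t\sigma_ik_i\ne 0$ in $F$ for every integer $t$-tuple $(k_1,\dots,k_t)\ne\vec 0$ with $0\le k_i\le n_i$ for all $i$. Then $$V=\Big\{a\in M_n(F):\ e_iae_j=0 \text{ for all } 1\le i<j\le t,\ \ \sum_{i=1}^t\sigma_i\,\mathrm{Tr}(e_iae_i)=0\Big\}$$ (the matrices which are block lower triangular with respect to $e_1,\dots,e_t$ and whose diagonal blocks $a_{ii}=e_iae_i$ satisfy $\sum_i\sigma_i\mathrm{Tr}(a_{ii})=0$) is a Mathieu subspace of $M_n(F)$.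
   Context: Let $\mathcal A$ be an associative algebra over a field $F$. An $F$-subspace $M\subseteq\mathcal A$ is a Mathieu subspace (MS) of $\mathcal A$ if for all $a,b,c\in\mathcal A$ such that $a^m\in M$ for all $m\ge 1$, there exists $N$ (depending on $a,b,c$) such that $ba^mc\in M$ for all $m\ge N$. *)

theory Defs
  imports "HOL-Analysis.Analysis"
begin

primrec matpow :: "'a::semiring_1^'n^'n \<Rightarrow> nat \<Rightarrow> 'a^'n^'n" where
  "matpow A 0 = mat 1"
| "matpow A (Suc m) = A ** matpow A m"

definition msmult :: "'a::field \<Rightarrow> 'a^'n^'n \<Rightarrow> 'a^'n^'n" where
  "msmult c A = (\<chi> i j. c * A $ i $ j)"

definition F_subspace :: "('a::field^'n^'n) set \<Rightarrow> bool" where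
  "F_subspace M \<longleftrightarrow> 0 \<in> M \<and> (\<forall>x\<in>M. \<forall>y\<in>M. x + y \<in> M) \<and> (\<forall>c. \<forall>x\<in>M. msmult c x \<in> M)"

definition mathieu_subspace :: "('a::field^'n^'n) set \<Rightarrow> bool" where
  "mathieu_subspace M \<longleftrightarrow> F_subspace M \<and>
     (\<forall>a b c. (\<forall>m\<ge>1. matpow a m \<in> M) \<longrightarrow> (\<exists>N. \<forall>m\<ge>N. b ** matpow a m ** c \<in> M))"

end

theory Submission
  imports Defs
begin

(* Suppose that a^m \<in> V for all m \<ge> 1. Then a is block lower triangular, so the diagonal blocks
   of a^m are the powers of the diagonal blocks B_i = e_i a e_i of a. Fitting's lemma, made uniform
   in i by a common annihilating polynomial, yields r \<ge> 1 and a polynomial h with h(0) = 0 such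
   that each h(B_i) is idempotent and h(B_i) = 0 forces B_i^r = 0. As h has no constant term, the
   trace condition on the powers of a gives \<Sum> \<sigma>_i Tr h(B_i) = 0; the trace of the idempotent
   h(B_i) is its rank, which is at most rank e_i, so the hypothesis on \<sigma> forces every h(B_i) to
   vanish. Hence a^r is strictly block lower triangular, a^(r t) = 0, and b a^m c = 0 \<in> V for
   all large m. *)

lemma mat_add: "mat (a + b) = (mat a + mat b :: 'a::semiring_1^'n^'n)"
  by (simp add: mat_def vec_eq_iff)

lemma mat_mult_nth: "(mat c ** X) $ i $ j = c * (X $ i $ j :: 'a::semiring_1)"
  by (simp add: matrix_matrix_mult_def mat_def if_distrib if_distribR cong: if_cong)

lemma mat_mult_mat: "mat a ** mat b = (mat (a * b) :: 'a::semiring_1^'n^'n)"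
  by (simp add: vec_eq_iff mat_mult_nth) (simp add: mat_def)

lemma matrix_mul_mat_commute: "X ** (mat c ** Y) = mat c ** (X ** Y :: 'a::comm_semiring_1^_^_)"
proof -
  have "(X ** (mat c ** Y)) $ i $ j = (mat c ** (X ** Y)) $ i $ j" for i j
  proof -
    have "(X ** (mat c ** Y)) $ i $ j = (\<Sum>k\<in>UNIV. X $ i $ k * (mat c ** Y) $ k $ j)"
      by (simp add: matrix_matrix_mult_def)
    also have "\<dots> = c * (\<Sum>k\<in>UNIV. X $ i $ k * Y $ k $ j)"
      by (simp add: mat_mult_nth sum_distrib_left mult_ac)
    also have "\<dots> = (mat c ** (X ** Y)) $ i $ j"
      by (subst mat_mult_nth) (simp add: matrix_matrix_mult_def)
    finally show ?thesis .
  qed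
  then show ?thesis by (simp add: vec_eq_iff)
qed

lemma msmult_eq_mat_mult: "msmult c x = mat c ** x"
  by (simp add: msmult_def vec_eq_iff mat_mult_nth)

lemma matrix_add_rdistrib: "(A + B) ** C = A ** C + (B ** C :: 'a::semiring_1^_^_)"
  by (vector matrix_matrix_mult_def sum.distrib[symmetric] field_simps)

lemma matrix_sum_ldistrib: "A ** sum f S = (\<Sum>k\<in>S. A ** f k :: 'a::semiring_1^_^_)"
  by (induction S rule: infinite_finite_induct) (auto simp: matrix_add_ldistrib)

lemma matrix_sum_rdistrib: "sum f S ** A = (\<Sum>k\<in>S. f k ** A :: 'a::semiring_1^_^_)"
  by (induction S rule: infinite_finite_induct) (auto simp: matrix_add_rdistrib)

lemma trace_mat_mult: "trace (mat c ** A) = c * trace (A :: 'a::comm_semiring_1^'n^'n)"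
  by (simp add: trace_def mat_mult_nth sum_distrib_left)

lemma trace_sum: "trace (sum f S) = (\<Sum>k\<in>S. trace (f k :: 'a::comm_semiring_1^'n^'n))"
  by (induction S rule: infinite_finite_induct) (auto simp: trace_add trace_def sum.distrib)

lemma trace_zero [simp]: "trace (0 :: 'a::semiring_1^'n^'n) = 0"
  by (simp add: trace_def)

lemma matpow_add: "matpow A (m + k) = matpow A m ** matpow A k"
  by (induction m) (simp_all add: matrix_mul_assoc)

lemma matpow_1 [simp]: "matpow A 1 = A"
  by simp

lemma matpow_mult: "matpow A (m * k) = matpow (matpow A m) k"
  by (induction k) (simp_all add: matpow_add)

lemma matpow_eq_0_mono:
  assumes "matpow A N = 0" and "N \<le> m"
  shows "matpow A m = 0"
  using matpow_add[of A "m - N" N] assms by simp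

subsection \<open>Ranks and traces over a field\<close>

lemma rank_mul_le_right_gen:
  fixes A :: "'a::field^'n^'m" and B :: "'a^'p^'n"
  shows "rank (A ** B) \<le> rank B"
proof -
  have "rows (A ** B) \<subseteq> vec.span (rows B)"
  proof
    fix r assume "r \<in> rows (A ** B)"
    then obtain i where r: "r = row i (A ** B)" by (auto simp: rows_def)
    have "row i (A ** B) = (\<Sum>k\<in>UNIV. A $ i $ k *s row k B)"
      by (simp add: vec_eq_iff sum_component row_def matrix_matrix_mult_def)
    also have "\<dots> \<in> vec.span (rows B)"
      by (intro vec.span_sum vec.span_scale vec.span_base) (auto simp: rows_def)
    finally show "r \<in> vec.span (rows B)" using r by simp
  qed
  then show ?thesis by (simp add: row_rank_def_gen vec.dim_mono)
qed

lemma rank_eq_0_gen: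
  fixes A :: "'a::field^'n^'m"
  assumes "rank A = 0"
  shows "A = 0"
proof -
  have "rows A \<subseteq> {0}" using assms by (simp add: row_rank_def_gen)
  then have "row i A = 0" for i by (auto simp: rows_def)
  then show ?thesis by (simp add: vec_eq_iff row_def)
qed

lemma matrix_vector_mult_in_columns_span: "A *v x \<in> vec.span (columns A)"
proof -
  have "A *v x = (\<Sum>i\<in>UNIV. x $ i *s column i A)" by (rule matrix_mult_sum)
  also have "\<dots> \<in> vec.span (columns A)"
    by (intro vec.span_sum vec.span_scale vec.span_base) (auto simp: columns_def)
  finally show ?thesis .
qed

lemma matrix_vector_mult_axis: "A *v axis j 1 = column j (A :: 'a::semiring_1^'n^'m)"
  by (simp add: vec_eq_iff column_def matrix_vector_mult_def axis_def if_distrib cong: if_cong)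

lemma idempotent_fixes_columns_span:
  fixes A :: "'a::field^'n^'n"
  assumes "A ** A = A" and "v \<in> vec.span (columns A)"
  shows "A *v v = v"
proof -
  have "A *v column i A = column i A" for i
    using assms(1) by (metis matrix_vector_mult_axis matrix_vector_mul_assoc)
  then show ?thesis
    using vec.linear_eq_on_span[OF matrix_vector_mul_linear_gen[of A] vec.linear_id, of "columns A" v] assms(2)
    by (auto simp: columns_def)
qed

text \<open>Expand the columns of \<open>A\<close> in a basis \<open>Bs\<close> of the column space: since \<open>A\<close> fixes each
  \<open>b \<in> Bs\<close>, the \<open>b\<close>-coordinate of \<open>A *v b\<close> is 1, and these coordinates add up to the trace.\<close>
lemma trace_idempotent_eq_dim_columns:
  fixes A :: "'a::field^'n^'n"
  assumes idem: "A ** A = A"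
  shows "trace A = of_nat (vec.dim (columns A))"
proof -
  let ?R = "vec.span (columns A)"
  obtain Bs where Bs: "Bs \<subseteq> ?R" "vec.independent Bs" "?R \<subseteq> vec.span Bs" "card Bs = vec.dim ?R"
    using vec.basis_exists by blast
  have fin: "finite Bs" using Bs(2) vec.finiteI_independent by blast
  have span_Bs: "vec.span Bs = ?R"
    using Bs(1,3) by (metis subset_antisym vec.span_mono vec.span_span)
  let ?rep = "vec.representation Bs"
  let ?c = "\<lambda>j. A *v axis j 1"
  have c_in: "?c j \<in> vec.span Bs" for j
    using matrix_vector_mult_in_columns_span span_Bs by blast
  have expand: "?c j = (\<Sum>b\<in>Bs. ?rep (?c j) b *s b)" for j
    using vec.sum_representation_eq[OF Bs(2) c_in fin order_refl] by simp
  have diag: "(\<Sum>j\<in>UNIV. b $ j * ?rep (?c j) b) = 1" if b: "b \<in> Bs" for b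
  proof -
    have "?rep (\<Sum>j\<in>UNIV. b $ j *s ?c j) = (\<lambda>d. \<Sum>j\<in>UNIV. ?rep (b $ j *s ?c j) d)"
      using c_in by (intro vec.representation_sum[OF Bs(2)]) (simp add: vec.span_scale)
    also have "\<dots> = (\<lambda>d. \<Sum>j\<in>UNIV. b $ j * ?rep (?c j) d)"
      using vec.representation_scale[OF Bs(2) c_in] by simp
    finally have "(\<Sum>j\<in>UNIV. b $ j * ?rep (?c j) b) = ?rep (\<Sum>j\<in>UNIV. b $ j *s ?c j) b"
      by simp
    also have "(\<Sum>j\<in>UNIV. b $ j *s ?c j) = b"
      using idempotent_fixes_columns_span[OF idem] Bs(1) b
      by (auto simp: matrix_vector_mult_axis simp flip: matrix_mult_sum)
    finally show ?thesis
      by (simp add: vec.representation_basis[OF Bs(2) b])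
  qed
  have "trace A = (\<Sum>j\<in>UNIV. ?c j $ j)"
    by (simp add: trace_def matrix_vector_mult_axis column_def)
  also have "\<dots> = (\<Sum>j\<in>UNIV. \<Sum>b\<in>Bs. ?rep (?c j) b * b $ j)"
    by (subst expand) (simp add: sum_component)
  also have "\<dots> = (\<Sum>b\<in>Bs. \<Sum>j\<in>UNIV. b $ j * ?rep (?c j) b)"
    by (subst sum.swap) (simp add: mult.commute)
  also have "\<dots> = of_nat (card Bs)"
    by (simp add: diag)
  finally show ?thesis using Bs(4) by simp
qed

lemma trace_idempotent_eq_rank:
  fixes A :: "'a::field^'n^'n"
  assumes "A ** A = A"
  shows "trace A = of_nat (rank A)"
proof -
  have "transpose A ** transpose A = transpose A"
    using assms by (metis matrix_transpose_mul)
  then have "trace (transpose A) = of_nat (rank A)"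
    by (simp add: trace_idempotent_eq_dim_columns row_rank_def_gen)
  then show ?thesis by (simp add: trace_def transpose_def)
qed

subsection \<open>Polynomials evaluated at a matrix\<close>

definition poly_mat :: "'a::comm_ring_1 poly \<Rightarrow> 'a^'n^'n \<Rightarrow> 'a^'n^'n" where
  "poly_mat p A = (\<Sum>k\<le>degree p. mat (coeff p k) ** matpow A k)"

lemma poly_mat_eq_sum_atMost:
  assumes "degree p \<le> N"
  shows "poly_mat p A = (\<Sum>k\<le>N. mat (coeff p k) ** matpow A k)"
  unfolding poly_mat_def
  by (rule sum.mono_neutral_left) (use assms in \<open>auto simp: coeff_eq_0\<close>)

lemma poly_mat_0 [simp]: "poly_mat 0 A = 0"
  by (simp add: poly_mat_def)

lemma poly_mat_add: "poly_mat (p + q) A = poly_mat p A + poly_mat q A"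
proof -
  let ?N = "max (degree p) (degree q)"
  have "poly_mat (p + q) A = (\<Sum>k\<le>?N. mat (coeff (p + q) k) ** matpow A k)"
    by (rule poly_mat_eq_sum_atMost) (simp add: degree_add_le)
  also have "\<dots> = poly_mat p A + poly_mat q A"
    by (simp add: poly_mat_eq_sum_atMost[of _ ?N] mat_add matrix_add_rdistrib sum.distrib)
  finally show ?thesis .
qed

lemma poly_mat_diff: "poly_mat (p - q) A = poly_mat p A - poly_mat q A"
  using poly_mat_add[of "p - q" q A] by (simp add: eq_diff_eq)

lemma poly_mat_smult: "poly_mat (smult c p) A = mat c ** poly_mat p A"
proof -
  have "poly_mat (smult c p) A = (\<Sum>k\<le>degree p. mat (coeff (smult c p) k) ** matpow A k)"
    by (rule poly_mat_eq_sum_atMost) (rule degree_smult_le)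
  then show ?thesis
    by (simp add: poly_mat_def matrix_sum_ldistrib matrix_mul_assoc mat_mult_mat)
qed

lemma poly_mat_pCons: "poly_mat (pCons c p) A = mat c + A ** poly_mat p A"
proof -
  have "poly_mat (pCons c p) A = (\<Sum>k\<le>Suc (degree p). mat (coeff (pCons c p) k) ** matpow A k)"
    by (rule poly_mat_eq_sum_atMost) (simp add: degree_pCons_le)
  also have "\<dots> = mat c + (\<Sum>k\<le>degree p. mat (coeff p k) ** (A ** matpow A k))"
    by (subst sum.atMost_Suc_shift) simp
  finally show ?thesis
    by (simp add: poly_mat_def matrix_sum_ldistrib matrix_mul_mat_commute)
qed

lemma poly_mat_mult: "poly_mat (p * q) A = poly_mat p A ** poly_mat q A"
  by (induction p rule: pCons_induct)
    (simp_all add: poly_mat_add poly_mat_smult poly_mat_pCons matrix_add_rdistrib matrix_mul_assoc)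

lemma poly_mat_monom: "poly_mat (monom c k) A = mat c ** matpow A k"
proof -
  have "poly_mat (monom c k) A = (\<Sum>j\<le>k. mat (coeff (monom c k) j) ** matpow A j)"
    by (rule poly_mat_eq_sum_atMost) (simp add: degree_monom_le)
  then show ?thesis by (simp add: coeff_monom if_distrib if_distribR cong: if_cong)
qed

lemma poly_mat_x [simp]: "poly_mat [:0, 1:] A = A"
  by (simp add: poly_mat_pCons)

lemma poly_mat_1 [simp]: "poly_mat 1 A = mat 1"
  by (simp add: one_pCons poly_mat_pCons)

lemma poly_mat_x_power: "poly_mat ([:0, 1:] ^ r) A = matpow A r"
  by (induction r) (simp_all add: poly_mat_mult poly_mat_pCons)

lemma poly_mat_sum: "poly_mat (sum f S) A = (\<Sum>k\<in>S. poly_mat (f k) A)"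
  by (induction S rule: infinite_finite_induct) (auto simp: poly_mat_add)

lemma poly_mat_eq_0_if_dvd:
  assumes "poly_mat p A = 0" and "p dvd q"
  shows "poly_mat q A = 0"
  using assms by (auto simp: poly_mat_mult elim!: dvdE)

lemma trace_poly_mat: "trace (poly_mat p A) = (\<Sum>k\<le>degree p. coeff p k * trace (matpow A k))"
  by (simp add: poly_mat_def trace_sum trace_mat_mult)

lemma rank_poly_mat_le:
  fixes A :: "'a::field^'n^'n"
  assumes "poly p 0 = 0"
  shows "rank (poly_mat p A) \<le> rank A"
proof -
  obtain q where "p = q * [:0, 1:]"
    using assms poly_eq_0_iff_dvd[of p 0] by (auto simp: mult.commute elim!: dvdE)
  then have "poly_mat p A = poly_mat q A ** A" by (simp only: poly_mat_mult poly_mat_x)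
  then show ?thesis by (simp add: rank_mul_le_right_gen)
qed

subsection \<open>Fitting's lemma\<close>

lemma poly_mat_annihilator_exists:
  fixes A :: "'a::field^'n^'n"
  obtains P where "P \<noteq> 0" and "poly_mat P A = 0"
proof -
  define flat :: "'a^'n^'n \<Rightarrow> 'a^('n \<times> 'n)" where "flat M = (\<chi> p. M $ fst p $ snd p)" for M
  have flat_inj: "M = M'" if "flat M = flat M'" for M M'
    using that by (simp add: flat_def vec_eq_iff)
  define N where "N = CARD('n \<times> 'n)"
  define w where "w k = flat (matpow A k)" for k
  show ?thesis
  proof (cases "inj_on w {..N}")
    case False
    then obtain k l where kl: "k \<noteq> l" "matpow A k = matpow A l"
      using flat_inj by (auto simp: inj_on_def w_def)
    let ?P = "monom 1 k - monom (1::'a) l"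
    have "coeff ?P k = 1" using kl by (simp add: coeff_monom)
    then have "?P \<noteq> 0" by (metis coeff_0 zero_neq_one)
    moreover have "poly_mat ?P A = 0" by (simp add: poly_mat_diff poly_mat_monom kl)
    ultimately show ?thesis by (rule that)
  next
    case True
    have "vec.dependent (w ` {..N})"
    proof (rule ccontr)
      assume "\<not> vec.dependent (w ` {..N})"
      then have "card (w ` {..N}) \<le> vec.dim (UNIV :: ('a^('n \<times> 'n)) set)"
        using vec.independent_bound_general vec.dim_subset[of _ UNIV] by (meson le_trans top_greatest)
      also have "\<dots> = N" unfolding N_def by (rule vec_dim_card)
      finally show False using True by (simp add: card_image)
    qed
    then obtain u where u: "\<exists>v\<in>w ` {..N}. u v \<noteq> 0" "(\<Sum>v\<in>w ` {..N}. u v *s v) = 0"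
      using vec.dependent_finite[of "w ` {..N}"] by auto
    define P where "P = (\<Sum>k\<le>N. monom (u (w k)) k)"
    obtain k0 where "k0 \<le> N" "u (w k0) \<noteq> 0" using u(1) by auto
    then have "coeff P k0 \<noteq> 0" by (simp add: P_def coeff_sum coeff_monom)
    then have "P \<noteq> 0" by auto
    moreover have "poly_mat P A = 0"
    proof -
      have "(\<Sum>k\<le>N. u (w k) *s w k) $ (i, j) = 0" for i j
        using u(2) by (simp add: sum.reindex[OF True])
      then have "(\<Sum>k\<le>N. mat (u (w k)) ** matpow A k) $ i $ j = 0" for i j
        by (simp add: sum_component mat_mult_nth w_def flat_def)
      then show ?thesis by (simp add: P_def poly_mat_sum poly_mat_monom vec_eq_iff)
    qed
    ultimately show ?thesis by (rule that)
  qed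
qed

lemma common_annihilator_exists:
  fixes A :: "'i \<Rightarrow> 'a::field^'n^'n"
  assumes "finite I"
  obtains P where "P \<noteq> 0" and "\<forall>i\<in>I. poly_mat P (A i) = 0"
proof -
  have "\<forall>i. \<exists>P. P \<noteq> 0 \<and> poly_mat P (A i) = 0"
    by (meson poly_mat_annihilator_exists)
  then obtain Pf where Pf: "Pf i \<noteq> 0" "poly_mat (Pf i) (A i) = 0" for i
    by metis
  have "prod Pf I \<noteq> 0" using Pf(1) assms by (simp add: prod_zero_iff)
  moreover have "poly_mat (prod Pf I) (A i) = 0" if "i \<in> I" for i
    using Pf(2) assms that by (auto intro: poly_mat_eq_0_if_dvd dvd_prodI)
  ultimately show ?thesis using that by blast
qed

text \<open>Write \<open>P = x ^ k * Q\<close> with \<open>x\<close> not dividing \<open>Q\<close> and put \<open>r = k + 1\<close>, so that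
  \<open>x ^ r * Q = x * P\<close>. Writing \<open>Q = c (1 - z)\<close> with \<open>x\<close> dividing \<open>z\<close>, the geometric sum
  \<open>1 - z ^ r = (1 - z) (1 + \<dots> + z ^ (r - 1))\<close> gives a Bezout identity \<open>u x ^ r + v Q = 1\<close>,
  and \<open>h = u x ^ r\<close> is idempotent modulo \<open>P\<close>.\<close>
lemma fitting_polynomial:
  fixes P :: "'a::field poly"
  assumes "P \<noteq> 0"
  obtains r h where "r \<ge> 1" "poly h 0 = 0" "P dvd h * h - h"
    "P dvd [:0, 1:] ^ r - h * [:0, 1:] ^ r"
proof -
  let ?x = "[:0, 1:] :: 'a poly"
  obtain Q where PQ: "P = ?x ^ order 0 P * Q" and "\<not> ?x dvd Q"
    using order_decomp[OF assms, of 0] by auto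
  define r where "r = Suc (order 0 P)"
  define X where "X = ?x ^ r"
  have XQ: "X * Q = ?x * P" by (subst PQ) (simp add: X_def r_def mult_ac)
  obtain c W where Q: "Q = pCons c W" by (cases Q) auto
  have "c \<noteq> 0" using \<open>\<not> ?x dvd Q\<close> by (auto simp: Q dvd_iff_poly_eq_0)
  define z where "z = ?x * smult (- 1 / c) W"
  have "Q = smult c (1 - z)"
    using \<open>c \<noteq> 0\<close> by (simp add: Q z_def algebra_simps one_pCons smult_add_right)
  then have "smult (1 / c) (\<Sum>i<r. z ^ i) * Q = 1 - z ^ r"
    using \<open>c \<noteq> 0\<close> by (simp add: one_diff_power_eq mult.commute)
  moreover have "z ^ r = X * (smult (- 1 / c) W) ^ r"
    by (simp only: z_def X_def power_mult_distrib)
  ultimately have "(smult (- 1 / c) W) ^ r * X + smult (1 / c) (\<Sum>i<r. z ^ i) * Q = 1"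
    by (simp add: mult.commute)
  then obtain u v where uv: "u * X + v * Q = 1" by blast
  define h where "h = u * X"
  have idem: "h * h - h = - (u * v * ?x) * P" using XQ uv unfolding h_def by algebra
  have fit: "X - h * X = (v * ?x) * P" using XQ uv unfolding h_def by algebra
  show ?thesis
  proof (rule that[of r h])
    show "r \<ge> 1" and "poly h 0 = 0" by (simp_all add: h_def X_def r_def)
    show "P dvd h * h - h" and "P dvd ?x ^ r - h * ?x ^ r"
      unfolding idem fit[unfolded X_def] by (rule dvd_triv_right)+
  qed
qed

subsection \<open>Block triangular matrices\<close>

definition block_lower_triangular :: "(nat \<Rightarrow> 'a::semiring_1^'n^'n) \<Rightarrow> nat \<Rightarrow> 'a^'n^'n \<Rightarrow> bool" where
  "block_lower_triangular e t x \<longleftrightarrow> (\<forall>i\<in>{1..t}. \<forall>j\<in>{1..t}. i < j \<longrightarrow> e i ** x ** e j = 0)"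

locale orthogonal_idempotents =
  fixes e :: "nat \<Rightarrow> 'a::semiring_1^'n^'n" and t :: nat
  assumes idempotent: "i \<in> {1..t} \<Longrightarrow> e i ** e i = e i"
    and orthogonal: "i \<in> {1..t} \<Longrightarrow> j \<in> {1..t} \<Longrightarrow> i \<noteq> j \<Longrightarrow> e i ** e j = 0"
    and sum_eq_one: "(\<Sum>i=1..t. e i) = mat 1"
begin

lemma block_of_product:
  "e i ** (x ** y) ** e j = (\<Sum>k=1..t. (e i ** x ** e k) ** (e k ** y ** e j))"
proof -
  have "x ** y = x ** (\<Sum>k=1..t. e k) ** y" by (simp only: sum_eq_one matrix_mul_rid)
  then have "e i ** (x ** y) ** e j = (\<Sum>k=1..t. e i ** (x ** e k ** y) ** e j)"
    by (simp add: matrix_sum_ldistrib matrix_sum_rdistrib)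
  also have "\<dots> = (\<Sum>k=1..t. (e i ** x ** e k) ** (e k ** y ** e j))"
    by (intro sum.cong refl) (metis idempotent matrix_mul_assoc)
  finally show ?thesis .
qed

lemma block_lower_triangular_mult:
  assumes "block_lower_triangular e t x" and "block_lower_triangular e t y"
  shows "block_lower_triangular e t (x ** y)"
  unfolding block_lower_triangular_def
proof (intro ballI impI)
  fix i j assume ij: "i \<in> {1..t}" "j \<in> {1..t}" "i < j"
  have "(e i ** x ** e k) ** (e k ** y ** e j) = 0" if "k \<in> {1..t}" for k
    using assms ij that by (cases "i < k") (auto simp: block_lower_triangular_def)
  then show "e i ** (x ** y) ** e j = 0" by (simp add: block_of_product)
qed

lemma block_lower_triangular_matpow:
  assumes "block_lower_triangular e t a"
  shows "block_lower_triangular e t (matpow a m)"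
proof (induction m)
  case 0
  show ?case using orthogonal by (simp add: block_lower_triangular_def)
next
  case (Suc m)
  then show ?case using assms by (simp add: block_lower_triangular_mult)
qed

lemma diagonal_block_of_product:
  assumes "block_lower_triangular e t x" and "block_lower_triangular e t y" and i: "i \<in> {1..t}"
  shows "e i ** (x ** y) ** e i = (e i ** x ** e i) ** (e i ** y ** e i)"
proof -
  let ?f = "\<lambda>k. (e i ** x ** e k) ** (e k ** y ** e i)"
  have "?f k = 0" if "k \<in> {1..t} - {i}" for k
    using assms that by (cases "i < k") (auto simp: block_lower_triangular_def)
  then have "(\<Sum>k=1..t. ?f k) = ?f i"
    using sum.remove[OF finite_atLeastAtMost i, of ?f] by simp
  then show ?thesis by (simp add: block_of_product)
qed

lemma diagonal_block_matpow:
  assumes a: "block_lower_triangular e t a" and i: "i \<in> {1..t}" and "m \<ge> 1"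
  shows "e i ** matpow a m ** e i = matpow (e i ** a ** e i) m"
  using \<open>m \<ge> 1\<close>
proof (induction m rule: dec_induct)
  case base
  then show ?case by simp
next
  case (step m)
  then show ?case
    using diagonal_block_of_product[OF a block_lower_triangular_matpow[OF a] i] by simp
qed

lemma strictly_block_lower_shift:
  assumes strict: "\<forall>i\<in>{1..t}. \<forall>j\<in>{1..t}. i \<le> j \<longrightarrow> e i ** b ** e j = 0" and "k \<ge> 1"
  shows "b ** (\<Sum>j=k..t. e j) = (\<Sum>i=Suc k..t. e i) ** (b ** (\<Sum>j=k..t. e j))"
proof -
  have "b ** (\<Sum>j=k..t. e j) = (\<Sum>i=1..t. e i) ** b ** (\<Sum>j=k..t. e j)"
    by (simp only: sum_eq_one matrix_mul_lid)
  also have "\<dots> = (\<Sum>i=1..t. e i ** b ** (\<Sum>j=k..t. e j))"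
    by (simp add: matrix_sum_rdistrib)
  also have "\<dots> = (\<Sum>i=Suc k..t. e i ** b ** (\<Sum>j=k..t. e j))"
  proof (rule sum.mono_neutral_right)
    have "e i ** b ** e j = 0" if "i \<in> {1..t} - {Suc k..t}" "j \<in> {k..t}" for i j
      using strict that by auto
    then show "\<forall>i\<in>{1..t} - {Suc k..t}. e i ** b ** (\<Sum>j=k..t. e j) = 0"
      by (auto simp: matrix_sum_ldistrib intro!: sum.neutral)
  qed (use \<open>k \<ge> 1\<close> in auto)
  also have "\<dots> = (\<Sum>i=Suc k..t. e i) ** (b ** (\<Sum>j=k..t. e j))"
    by (simp add: matrix_sum_rdistrib matrix_mul_assoc)
  finally show ?thesis .
qed

text \<open>Each factor \<open>b\<close> moves the support one block further down, and there are \<open>t\<close> blocks.\<close>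
lemma strictly_block_lower_nilpotent:
  assumes strict: "\<forall>i\<in>{1..t}. \<forall>j\<in>{1..t}. i \<le> j \<longrightarrow> e i ** b ** e j = 0"
  shows "matpow b t = 0"
proof -
  let ?f = "\<lambda>k. \<Sum>i=k..t. e i"
  have shift: "b ** ?f k = ?f (Suc k) ** (b ** ?f k)" if "k \<ge> 1" for k
    using strictly_block_lower_shift[OF strict that] .
  have tail: "matpow b d ** ?f k = ?f (k + d) ** (matpow b d ** ?f k)" if "k \<ge> 1" "d \<ge> 1" for k d
    using \<open>d \<ge> 1\<close>
  proof (induction d rule: dec_induct)
    case base
    show ?case unfolding matpow_1 Suc_eq_plus1[symmetric] by (rule shift[OF \<open>k \<ge> 1\<close>])
  next
    case (step d)
    let ?g = "matpow b d ** ?f k"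
    have sh: "b ** ?f (k + d) = ?f (Suc (k + d)) ** (b ** ?f (k + d))"
      using \<open>k \<ge> 1\<close> by (intro shift) simp
    have "matpow b (Suc d) ** ?f k = (b ** ?f (k + d)) ** ?g"
      by (metis step.IH matrix_mul_assoc matpow.simps(2))
    also have "\<dots> = ?f (Suc (k + d)) ** (b ** ?f (k + d)) ** ?g"
      by (simp only: sh[symmetric])
    also have "\<dots> = ?f (k + Suc d) ** (matpow b (Suc d) ** ?f k)"
      by (metis step.IH matrix_mul_assoc matpow.simps(2) add_Suc_right)
    finally show ?case .
  qed
  show ?thesis
  proof (cases "t = 0")
    case True
    then show ?thesis using sum_eq_one by simp
  next
    case False
    have "matpow b t = matpow b t ** ?f 1" by (simp only: sum_eq_one matrix_mul_rid)
    also have "\<dots> = 0" using tail[of 1 t] False by simp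
    finally show ?thesis .
  qed
qed

lemma block_lower_nilpotent_if_diagonal_blocks_vanish:
  assumes a: "block_lower_triangular e t a" and diag: "\<forall>i\<in>{1..t}. e i ** a ** e i = 0"
  shows "matpow a t = 0"
proof (rule strictly_block_lower_nilpotent, intro ballI impI)
  fix i j assume "i \<in> {1..t}" "j \<in> {1..t}" "i \<le> j"
  then show "e i ** a ** e j = 0"
    using a diag by (cases "i = j") (auto simp: block_lower_triangular_def)
qed

end

subsection \<open>The weighted trace condition\<close>

lemma weighted_trace_poly_mat_eq_0:
  fixes B :: "'i \<Rightarrow> 'a::comm_ring_1^'n^'n"
  assumes "poly h 0 = 0" and "\<forall>m\<ge>1. (\<Sum>i\<in>I. \<sigma> i * trace (matpow (B i) m)) = 0"
  shows "(\<Sum>i\<in>I. \<sigma> i * trace (poly_mat h (B i))) = 0"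
proof -
  have "(\<Sum>i\<in>I. \<sigma> i * trace (poly_mat h (B i)))
      = (\<Sum>k\<le>degree h. coeff h k * (\<Sum>i\<in>I. \<sigma> i * trace (matpow (B i) k)))"
    by (simp add: trace_poly_mat sum_distrib_left mult_ac sum.swap[of _ I])
  also have "\<dots> = 0"
  proof (intro sum.neutral ballI)
    fix k
    show "coeff h k * (\<Sum>i\<in>I. \<sigma> i * trace (matpow (B i) k)) = 0"
      using assms by (cases "k = 0") (simp_all add: poly_0_coeff_0)
  qed
  finally show ?thesis .
qed

lemma diagonal_blocks_of_power_vanish:
  fixes e :: "nat \<Rightarrow> 'a::field^'n^'n"
  assumes "orthogonal_idempotents e t" and a: "block_lower_triangular e t a"
    and traces: "\<forall>m\<ge>1. (\<Sum>i=1..t. \<sigma> i * trace (e i ** matpow a m ** e i)) = 0"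
    and \<sigma>: "\<forall>k :: nat \<Rightarrow> nat. (\<forall>i\<in>{1..t}. k i \<le> rank (e i)) \<and> (\<exists>i\<in>{1..t}. k i \<noteq> 0)
           \<longrightarrow> (\<Sum>i=1..t. \<sigma> i * of_nat (k i)) \<noteq> 0"
  obtains r where "\<forall>i\<in>{1..t}. e i ** matpow a r ** e i = 0"
proof -
  interpret orthogonal_idempotents e t by fact
  define B where "B i = e i ** a ** e i" for i
  obtain P where "P \<noteq> 0" and P: "\<forall>i\<in>{1..t}. poly_mat P (B i) = 0"
    using common_annihilator_exists[of "{1..t}" B] by auto
  obtain r h where r: "r \<ge> 1" and h0: "poly h 0 = 0" and idem: "P dvd h * h - h"
    and fit: "P dvd [:0, 1:] ^ r - h * [:0, 1:] ^ r"
    using fitting_polynomial[OF \<open>P \<noteq> 0\<close>] by blast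
  define E where "E i = poly_mat h (B i)" for i
  have E_idem: "E i ** E i = E i" if "i \<in> {1..t}" for i
    using poly_mat_eq_0_if_dvd[OF P[rule_format, OF that] idem]
    by (simp add: E_def poly_mat_diff poly_mat_mult)
  have "(\<Sum>i=1..t. \<sigma> i * trace (matpow (B i) m)) = 0" if "m \<ge> 1" for m
  proof -
    have "(\<Sum>i=1..t. \<sigma> i * trace (matpow (B i) m))
        = (\<Sum>i=1..t. \<sigma> i * trace (e i ** matpow a m ** e i))"
      using diagonal_block_matpow[OF a _ that] by (intro sum.cong) (simp_all add: B_def)
    then show ?thesis using traces that by simp
  qed
  then have E_traces: "(\<Sum>i=1..t. \<sigma> i * trace (E i)) = 0"
    unfolding E_def using h0 by (intro weighted_trace_poly_mat_eq_0) auto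
  have "(\<Sum>i=1..t. \<sigma> i * of_nat (rank (E i))) = (\<Sum>i=1..t. \<sigma> i * trace (E i))"
    using E_idem by (intro sum.cong) (simp_all add: trace_idempotent_eq_rank)
  also have "\<dots> = 0" by (rule E_traces)
  finally have "(\<Sum>i=1..t. \<sigma> i * of_nat (rank (E i))) = 0" .
  moreover have "rank (E i) \<le> rank (e i)" for i
    using rank_poly_mat_le[OF h0, of "B i"] rank_mul_le_right_gen[of "e i ** a" "e i"]
    by (simp add: E_def B_def)
  ultimately have "\<not> (\<exists>i\<in>{1..t}. rank (E i) \<noteq> 0)"
    using \<sigma>[rule_format, of "\<lambda>i. rank (E i)"] by blast
  then have "\<forall>i\<in>{1..t}. E i = 0"
    by (auto intro: rank_eq_0_gen)
  then have "\<forall>i\<in>{1..t}. matpow (B i) r = 0"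
    using poly_mat_eq_0_if_dvd[OF P[rule_format] fit]
    by (simp add: E_def poly_mat_diff poly_mat_mult poly_mat_x_power)
  then have "\<forall>i\<in>{1..t}. e i ** matpow a r ** e i = 0"
    by (simp add: B_def diagonal_block_matpow[OF a _ r])
  then show ?thesis by (rule that)
qed

lemma F_subspace_block_lower_weighted_trace:
  "F_subspace {a :: 'a::field^'n^'n. (\<forall>i\<in>{1..t}. \<forall>j\<in>{1..t}. i < j \<longrightarrow> e i ** a ** e j = 0)
     \<and> (\<Sum>i=1..t. \<sigma> i * trace (e i ** a ** e i)) = 0}"
proof -
  have add: "e i ** (x + y) ** e j = e i ** x ** e j + e i ** y ** e j" for i j x y
    by (simp add: matrix_add_ldistrib matrix_add_rdistrib)
  have smult: "e i ** msmult c x ** e j = mat c ** (e i ** x ** e j)" for i j c x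
    by (simp only: msmult_eq_mat_mult matrix_mul_mat_commute) (simp only: matrix_mul_assoc)
  show ?thesis
    unfolding F_subspace_def
    by (auto simp: add smult trace_add trace_mat_mult distrib_left sum.distrib mult.left_commute
        simp flip: sum_distrib_left trace_def)
qed

theorem mainTheorem2:
  fixes e :: "nat \<Rightarrow> 'a::field^'n^'n" and \<sigma> :: "nat \<Rightarrow> 'a" and t :: nat
  assumes "t \<ge> 1"
    and "\<forall>i\<in>{1..t}. e i \<noteq> 0"
    and "\<forall>i\<in>{1..t}. e i ** e i = e i"
    and "\<forall>i\<in>{1..t}. \<forall>j\<in>{1..t}. i \<noteq> j \<longrightarrow> e i ** e j = 0"
    and "(\<Sum>i=1..t. e i) = mat 1"
    and "\<forall>k :: nat \<Rightarrow> nat. (\<forall>i\<in>{1..t}. k i \<le> rank (e i)) \<and> (\<exists>i\<in>{1..t}. k i \<noteq> 0)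
           \<longrightarrow> (\<Sum>i=1..t. \<sigma> i * of_nat (k i)) \<noteq> 0"
  shows "mathieu_subspace
           {a :: 'a^'n^'n. (\<forall>i\<in>{1..t}. \<forall>j\<in>{1..t}. i < j \<longrightarrow> e i ** a ** e j = 0)
              \<and> (\<Sum>i=1..t. \<sigma> i * trace (e i ** a ** e i)) = 0}"
    (is "mathieu_subspace ?V")
proof -
  interpret orthogonal_idempotents e t
    using assms(3-5) by unfold_locales auto
  have "\<exists>N. \<forall>m\<ge>N. b ** matpow a m ** c \<in> ?V" if powers: "\<forall>m\<ge>1. matpow a m \<in> ?V" for a b c
  proof -
    have a: "block_lower_triangular e t a"
      using powers[rule_format, of 1] by (simp add: block_lower_triangular_def)
    have traces: "\<forall>m\<ge>1. (\<Sum>i=1..t. \<sigma> i * trace (e i ** matpow a m ** e i)) = 0"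
      using powers by simp
    obtain r where diag: "\<forall>i\<in>{1..t}. e i ** matpow a r ** e i = 0"
      using diagonal_blocks_of_power_vanish[OF orthogonal_idempotents_axioms a traces assms(6)] .
    have "matpow a (r * t) = 0"
      unfolding matpow_mult
      by (rule block_lower_nilpotent_if_diagonal_blocks_vanish[OF block_lower_triangular_matpow[OF a] diag])
    then have "\<forall>m\<ge>r * t. b ** matpow a m ** c = 0"
      using matpow_eq_0_mono[of a "r * t"] by simp
    then show ?thesis by (intro exI[of _ "r * t"]) auto
  qed
  then show ?thesis
    unfolding mathieu_subspace_def using F_subspace_block_lower_weighted_trace by blast
qed

end
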